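(* Let $d\ge1$, let $\Lambda\subset\mathbb{R}^{2d}$ be a lattice, let $r>0$, and let $\Omega\subset\mathbb{R}^{2d}$ be a compact set with maximally Ahlfors regular boundary with constant $\kappa_{\partial\Omega}$. Then there exist constants $C,D$ (depending on $r$ and $\Lambda$) such that $$\#\partial^r_\Lambda\Omega\le C\,\frac{|\partial\Omega|}{\kappa_{\partial\Omega}}\Big(1+\frac{D}{|\partial\Omega|}\Big).$$
   Context: A lattice is $\Lambda=M\mathbb{Z}^{2d}$ with $M$ an invertible real $2d\times2d$ matrix. Write $n=2d$ for the ambient dimension, $\mathcal{H}^{n-1}$ for $(n-1)$-dimensional Hausdorff measure and $|\partial\Omega|=\mathcal{H}^{n-1}(\partial\Omega)$. The set $\Omega$ has maximally Ahlfors regular boundary with constant $\kappa_{\partial\Omega}>0$ if $\mathcal{H}^{n-1}(\partial\Omega\cap B(z,\varrho))\ge\kappa_{\partial\Omega}\varrho^{\,n-1}$ for every $z\in\partial\Omega$ and every $0<\varrho<|\partial\Omega|^{1/(n-1)}$. $B(z,\varrho)$ is the open ball; for $r>0$, $\partial^r_\Lambda\Omega=\Lambda\cap(\partial\Omega+B(0,r))$, and $\#$ denotes cardinality. *)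

theory Defs
  imports "HOL-Analysis.Analysis"
begin

definition hausdorff_premeasure :: "real \<Rightarrow> real \<Rightarrow> 'a::metric_space set \<Rightarrow> ennreal" where
  "hausdorff_premeasure s \<delta> E =
     (INF U \<in> {U :: nat \<Rightarrow> 'a set. E \<subseteq> (\<Union>i. U i) \<and> (\<forall>i. bounded (U i) \<and> diameter (U i) \<le> \<delta>)}.
        (\<Sum>i. ennreal (unit_ball_vol s * (diameter (U i) / 2) powr s)))"

definition hausdorff_measure :: "real \<Rightarrow> 'a::metric_space set \<Rightarrow> ennreal" where
  "hausdorff_measure s E = (SUP \<delta> \<in> {0<..}. hausdorff_premeasure s \<delta> E)"

definition bdry_measure :: "(real ^ 'n) set \<Rightarrow> ennreal" where
  "bdry_measure \<Omega> = hausdorff_measure (real CARD('n) - 1) (frontier \<Omega>)"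

text \<open>Maximally Ahlfors regular boundary with constant kappa > 0.  The range condition
  rho < |dOmega|^(1/(n-1)) is written as rho^(n-1) < |dOmega| (equivalent for rho > 0,
  and meaningful also when |dOmega| is infinite).\<close>
definition max_ahlfors_regular_boundary :: "(real ^ 'n) set \<Rightarrow> real \<Rightarrow> bool" where
  "max_ahlfors_regular_boundary \<Omega> \<kappa> \<longleftrightarrow> \<kappa> > 0 \<and>
     (\<forall>z \<in> frontier \<Omega>. \<forall>\<rho>. 0 < \<rho> \<and> ennreal (\<rho> ^ (CARD('n) - 1)) < bdry_measure \<Omega> \<longrightarrow>
        hausdorff_measure (real CARD('n) - 1) (frontier \<Omega> \<inter> ball z \<rho>) \<ge> ennreal (\<kappa> * \<rho> ^ (CARD('n) - 1)))"

definition lattice :: "real ^ 'n ^ 'n \<Rightarrow> (real ^ 'n) set" where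
  "lattice M = (\<lambda>k. M *v k) ` {k. \<forall>i. k $ i \<in> \<int>}"

definition bdry_lattice_points :: "real ^ 'n ^ 'n \<Rightarrow> real \<Rightarrow> (real ^ 'n) set \<Rightarrow> (real ^ 'n) set" where
  "bdry_lattice_points M r \<Omega> = lattice M \<inter> (frontier \<Omega> + ball 0 r)"

end

(*
  Choose a radius \<rho> \<le> 1 with \<rho>^(n-1) < |\<partial>\<Omega>| and |\<partial>\<Omega>| \<le> (|\<partial>\<Omega>| + 2) \<rho>^(n-1).  Extract from
  the r-boundary lattice points a maximal (2r + 2\<rho> + 1)-separated subset P.  Every point of P
  lies within r of a boundary point, and the \<rho>-balls around these boundary points are pairwise
  at distance at least 1, so Hausdorff measure is additive on them; by Ahlfors regularity each
  carries boundary measure at least \<kappa> \<rho>^(n-1), whence #P \<le> |\<partial>\<Omega>| / (\<kappa> \<rho>^(n-1)) \<le> (|\<partial>\<Omega>| + 2) / \<kappa>.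
  By maximality the boundary lattice points are covered by balls of radius 2r + 3 around P,
  and a lattice has uniformly boundedly many points in any ball of fixed radius.
*)
theory Submission
  imports Defs
begin

lemma hausdorff_premeasure_mono:
  "A \<subseteq> B \<Longrightarrow> hausdorff_premeasure s \<delta> A \<le> hausdorff_premeasure s \<delta> B"
  unfolding hausdorff_premeasure_def by (rule INF_superset_mono) auto

lemma hausdorff_measure_mono:
  "A \<subseteq> B \<Longrightarrow> hausdorff_measure s A \<le> hausdorff_measure s B"
  unfolding hausdorff_measure_def by (rule SUP_mono) (use hausdorff_premeasure_mono in blast)

lemma hausdorff_premeasure_antimono:
  "\<delta> \<le> \<delta>' \<Longrightarrow> hausdorff_premeasure s \<delta>' A \<le> hausdorff_premeasure s \<delta> A"
  unfolding hausdorff_premeasure_def by (rule INF_superset_mono) (auto intro: order_trans)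

lemma hausdorff_premeasure_Un_separated:
  fixes A B :: "'a::metric_space set"
  assumes sep: "\<And>x y. x \<in> A \<Longrightarrow> y \<in> B \<Longrightarrow> \<epsilon> \<le> dist x y" and "0 \<le> \<delta>" "\<delta> < \<epsilon>"
  shows "hausdorff_premeasure s \<delta> A + hausdorff_premeasure s \<delta> B \<le> hausdorff_premeasure s \<delta> (A \<union> B)"
  unfolding hausdorff_premeasure_def[of s \<delta> "A \<union> B"]
proof (rule INF_greatest)
  fix U :: "nat \<Rightarrow> 'a set"
  assume U: "U \<in> {U. A \<union> B \<subseteq> (\<Union>i. U i) \<and> (\<forall>i. bounded (U i) \<and> diameter (U i) \<le> \<delta>)}"
  define w where "w V = ennreal (unit_ball_vol s * (diameter V / 2) powr s)" for V :: "'a set"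
  define restrict where "restrict X k = (if U k \<inter> X \<noteq> {} then U k else {})" for X k
  have restrict_cover: "hausdorff_premeasure s \<delta> X \<le> (\<Sum>k. w (restrict X k))" if "X \<subseteq> A \<union> B" for X
    unfolding hausdorff_premeasure_def w_def
    by (rule INF_lower) (use U that \<open>0 \<le> \<delta>\<close> in \<open>fastforce simp: restrict_def\<close>)
  have meets_one: "\<not> (U k \<inter> A \<noteq> {} \<and> U k \<inter> B \<noteq> {})" for k
  proof
    assume "U k \<inter> A \<noteq> {} \<and> U k \<inter> B \<noteq> {}"
    then obtain x y where "x \<in> U k" "x \<in> A" "y \<in> U k" "y \<in> B" by blast
    then have "dist x y \<le> diameter (U k)" using U diameter_bounded_bound by blast
    moreover have "\<epsilon> \<le> dist x y" using sep \<open>x \<in> A\<close> \<open>y \<in> B\<close> .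
    moreover have "diameter (U k) \<le> \<delta>" using U by blast
    ultimately show False using \<open>\<delta> < \<epsilon>\<close> by linarith
  qed
  have "hausdorff_premeasure s \<delta> A + hausdorff_premeasure s \<delta> B
        \<le> (\<Sum>k. w (restrict A k)) + (\<Sum>k. w (restrict B k))"
    by (intro add_mono restrict_cover) auto
  also have "\<dots> = (\<Sum>k. w (restrict A k) + w (restrict B k))"
    by (rule suminf_add) auto
  also have "\<dots> \<le> (\<Sum>k. w (U k))"
    by (rule suminf_le) (use meets_one in \<open>auto simp: restrict_def w_def\<close>)
  finally show "hausdorff_premeasure s \<delta> A + hausdorff_premeasure s \<delta> B
        \<le> (\<Sum>i. ennreal (unit_ball_vol s * (diameter (U i) / 2) powr s))"
    unfolding w_def .
qed

lemma hausdorff_measure_Un_separated: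
  fixes A B :: "'a::metric_space set"
  assumes sep: "\<And>x y. x \<in> A \<Longrightarrow> y \<in> B \<Longrightarrow> \<epsilon> \<le> dist x y" and "\<epsilon> > 0"
  shows "hausdorff_measure s A + hausdorff_measure s B \<le> hausdorff_measure s (A \<union> B)"
proof -
  have "hausdorff_premeasure s \<delta>\<^sub>A A + hausdorff_premeasure s \<delta>\<^sub>B B \<le> hausdorff_measure s (A \<union> B)"
    if "\<delta>\<^sub>A > 0" "\<delta>\<^sub>B > 0" for \<delta>\<^sub>A \<delta>\<^sub>B
  proof -
    define \<delta> where "\<delta> = min (min \<delta>\<^sub>A \<delta>\<^sub>B) (\<epsilon> / 2)"
    have \<delta>: "0 < \<delta>" "\<delta> < \<epsilon>" "\<delta> \<le> \<delta>\<^sub>A" "\<delta> \<le> \<delta>\<^sub>B"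
      using that \<open>\<epsilon> > 0\<close> by (auto simp: \<delta>_def)
    have "hausdorff_premeasure s \<delta>\<^sub>A A + hausdorff_premeasure s \<delta>\<^sub>B B
          \<le> hausdorff_premeasure s \<delta> A + hausdorff_premeasure s \<delta> B"
      using \<delta> by (intro add_mono hausdorff_premeasure_antimono)
    also have "\<dots> \<le> hausdorff_premeasure s \<delta> (A \<union> B)"
      using \<delta> by (intro hausdorff_premeasure_Un_separated[OF sep]) auto
    also have "\<dots> \<le> hausdorff_measure s (A \<union> B)"
      unfolding hausdorff_measure_def by (rule SUP_upper) (use \<delta> in auto)
    finally show ?thesis .
  qed
  then show ?thesis
    unfolding hausdorff_measure_def
    by (simp add: ennreal_SUP_add_left[symmetric] ennreal_SUP_add_right) (intro SUP_least; simp)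
qed

lemma hausdorff_measure_UN_separated:
  fixes A :: "'i \<Rightarrow> 'a::metric_space set"
  assumes "finite I" and "\<epsilon> > 0"
    and "\<And>i j x y. i \<in> I \<Longrightarrow> j \<in> I \<Longrightarrow> i \<noteq> j \<Longrightarrow> x \<in> A i \<Longrightarrow> y \<in> A j \<Longrightarrow> \<epsilon> \<le> dist x y"
  shows "(\<Sum>i\<in>I. hausdorff_measure s (A i)) \<le> hausdorff_measure s (\<Union>i\<in>I. A i)"
  using assms(1,3)
proof (induction I rule: finite_induct)
  case empty
  then show ?case by simp
next
  case (insert j I)
  have "(\<Sum>i\<in>insert j I. hausdorff_measure s (A i))
        = hausdorff_measure s (A j) + (\<Sum>i\<in>I. hausdorff_measure s (A i))"
    using insert.hyps by simp
  also have "\<dots> \<le> hausdorff_measure s (A j) + hausdorff_measure s (\<Union>i\<in>I. A i)"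
    using insert.IH insert.prems by (intro add_left_mono) blast
  also have "\<dots> \<le> hausdorff_measure s (A j \<union> (\<Union>i\<in>I. A i))"
    by (intro hausdorff_measure_Un_separated[OF _ \<open>\<epsilon> > 0\<close>])
      (use insert.hyps insert.prems in blast)
  finally show ?case by simp
qed

lemma card_mult_le_hausdorff_measure_packing:
  fixes z :: "'i \<Rightarrow> 'a::metric_space"
  assumes "finite I" and "\<epsilon> > 0"
    and sep: "\<And>i j. i \<in> I \<Longrightarrow> j \<in> I \<Longrightarrow> i \<noteq> j \<Longrightarrow> 2 * \<rho> + \<epsilon> \<le> dist (z i) (z j)"
    and lower: "\<And>i. i \<in> I \<Longrightarrow> m \<le> hausdorff_measure s (F \<inter> ball (z i) \<rho>)"
  shows "of_nat (card I) * m \<le> hausdorff_measure s F"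
proof -
  have balls_sep: "\<epsilon> \<le> dist x y"
    if "i \<in> I" "j \<in> I" "i \<noteq> j" "x \<in> F \<inter> ball (z i) \<rho>" "y \<in> F \<inter> ball (z j) \<rho>" for i j x y
  proof -
    have "2 * \<rho> + \<epsilon> \<le> dist (z i) (z j)" using sep that(1-3) .
    moreover have "dist (z i) x < \<rho>" "dist (z j) y < \<rho>" using that(4,5) by auto
    ultimately show ?thesis by metric
  qed
  have "of_nat (card I) * m = (\<Sum>i\<in>I. m)" by simp
  also have "\<dots> \<le> (\<Sum>i\<in>I. hausdorff_measure s (F \<inter> ball (z i) \<rho>))"
    using lower by (rule sum_mono)
  also have "\<dots> \<le> hausdorff_measure s (\<Union>i\<in>I. F \<inter> ball (z i) \<rho>)"
    using \<open>finite I\<close> \<open>\<epsilon> > 0\<close> balls_sep by (rule hausdorff_measure_UN_separated)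
  also have "\<dots> \<le> hausdorff_measure s F"
    by (rule hausdorff_measure_mono) auto
  finally show ?thesis .
qed

lemma exists_separated_net:
  fixes S :: "'a::metric_space set"
  assumes "finite S" and "R > 0"
  obtains S' where "S' \<subseteq> S" "\<And>p q. p \<in> S' \<Longrightarrow> q \<in> S' \<Longrightarrow> p \<noteq> q \<Longrightarrow> R \<le> dist p q"
    "S \<subseteq> (\<Union>q\<in>S'. ball q R)"
proof -
  have "\<exists>S'\<subseteq>S. (\<forall>p\<in>S'. \<forall>q\<in>S'. p \<noteq> q \<longrightarrow> R \<le> dist p q) \<and> S \<subseteq> (\<Union>q\<in>S'. ball q R)"
    using \<open>finite S\<close>
  proof (induction S rule: finite_induct)
    case empty
    then show ?case by auto
  next
    case (insert x S)
    then obtain S' where S': "S' \<subseteq> S" "\<forall>p\<in>S'. \<forall>q\<in>S'. p \<noteq> q \<longrightarrow> R \<le> dist p q"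
      "S \<subseteq> (\<Union>q\<in>S'. ball q R)" by blast
    show ?case
    proof (cases "x \<in> (\<Union>q\<in>S'. ball q R)")
      case True
      then show ?thesis using S' by (intro exI[of _ S']) auto
    next
      case False
      then show ?thesis using S' \<open>R > 0\<close> by (intro exI[of _ "insert x S'"]) (auto simp: dist_commute)
    qed
  qed
  then show ?thesis using that by blast
qed

lemma exists_separated_subset_card_le:
  fixes S :: "'a::metric_space set"
  assumes "finite S" and "R > 0" and "\<And>c. card (S \<inter> ball c R) \<le> N"
  obtains S' where "S' \<subseteq> S" "\<And>p q. p \<in> S' \<Longrightarrow> q \<in> S' \<Longrightarrow> p \<noteq> q \<Longrightarrow> R \<le> dist p q"
    "card S \<le> card S' * N"
proof -
  obtain S' where S': "S' \<subseteq> S" "\<And>p q. p \<in> S' \<Longrightarrow> q \<in> S' \<Longrightarrow> p \<noteq> q \<Longrightarrow> R \<le> dist p q"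
    and cover: "S \<subseteq> (\<Union>q\<in>S'. ball q R)"
    using exists_separated_net[OF assms(1,2)] by blast
  have "S = (\<Union>q\<in>S'. S \<inter> ball q R)" using cover by blast
  then have "card S \<le> (\<Sum>q\<in>S'. card (S \<inter> ball q R))"
    by (metis card_UN_le \<open>finite S\<close> \<open>S' \<subseteq> S\<close> finite_subset)
  also have "\<dots> \<le> card S' * N"
    using sum_bounded_above[of S' "\<lambda>q. card (S \<inter> ball q R)" N] assms(3) by (simp add: mult.commute)
  finally show ?thesis using that S' by blast
qed

lemma finite_card_integer_vectors_near:
  fixes c :: "real ^ 'n" and a :: real
  defines "Z \<equiv> {k. (\<forall>i. k $ i \<in> \<int>) \<and> (\<forall>i. \<bar>k $ i - c $ i\<bar> < a)}"
  shows "finite Z" and "card Z \<le> nat (\<lfloor>2 * a\<rfloor> + 1) ^ CARD('n)"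
proof -
  define g where "g k = (\<lambda>i. \<lfloor>k $ i + (a - c $ i)\<rfloor>)" for k :: "real ^ 'n"
  define T where "T = PiE (UNIV :: 'n set) (\<lambda>_. {0..\<lfloor>2 * a\<rfloor>})"
  have inj: "inj_on g Z"
  proof (rule inj_onI)
    fix k l assume "k \<in> Z" "l \<in> Z" and "g k = g l"
    have "k $ i = l $ i" for i
    proof -
      have "k $ i \<in> \<int>" "l $ i \<in> \<int>" using \<open>k \<in> Z\<close> \<open>l \<in> Z\<close> unfolding Z_def by blast+
      then obtain u v where u: "k $ i = of_int u" and v: "l $ i = of_int v" by (elim Ints_cases)
      have shift: "\<lfloor>of_int w + (a - c $ i)\<rfloor> = w + \<lfloor>a - c $ i\<rfloor>" for w
        by (rule int_add_floor[symmetric])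
      have "\<lfloor>k $ i + (a - c $ i)\<rfloor> = \<lfloor>l $ i + (a - c $ i)\<rfloor>"
        using fun_cong[OF \<open>g k = g l\<close>, of i] unfolding g_def .
      then have "u = v" using shift[of u] shift[of v] unfolding u v by linarith
      then show ?thesis using u v by simp
    qed
    then show "k = l" by (simp add: vec_eq_iff)
  qed
  have image_sub: "g ` Z \<subseteq> T"
  proof clarify
    fix k assume "k \<in> Z"
    have "g k i \<in> {0..\<lfloor>2 * a\<rfloor>}" for i
    proof -
      have "\<bar>k $ i - c $ i\<bar> < a" using \<open>k \<in> Z\<close> unfolding Z_def by blast
      then have "0 \<le> k $ i + (a - c $ i)" "k $ i + (a - c $ i) \<le> 2 * a" by linarith+
      then show ?thesis unfolding g_def by (simp add: floor_mono)
    qed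
    then show "g k \<in> T" unfolding T_def by blast
  qed
  have "finite T" and card_T: "card T = nat (\<lfloor>2 * a\<rfloor> + 1) ^ CARD('n)"
    unfolding T_def by (simp_all add: card_PiE finite_PiE)
  then show "finite Z"
    using finite_imageD[OF finite_subset[OF image_sub] inj] by blast
  have "card Z = card (g ` Z)" using inj by (rule card_image[symmetric])
  also have "\<dots> \<le> card T" using \<open>finite T\<close> image_sub by (rule card_mono)
  finally show "card Z \<le> nat (\<lfloor>2 * a\<rfloor> + 1) ^ CARD('n)" unfolding card_T .
qed

lemma lattice_ball_card_bounded:
  fixes M :: "real ^ 'n ^ 'n"
  assumes "invertible M"
  obtains N where "\<And>c. finite (lattice M \<inter> ball c R)" "\<And>c. card (lattice M \<inter> ball c R) \<le> N"
proof -
  obtain M' where M': "M ** M' = mat 1" "M' ** M = mat 1"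
    using assms unfolding invertible_def by blast
  obtain K where "K > 0" and K: "\<And>x. norm (M' *v x) \<le> norm x * K"
    using bounded_linear.pos_bounded[OF matrix_vector_mul_bounded_linear[of M']] by blast
  have inj: "inj_on (\<lambda>p. M' *v p) A" for A
    by (rule inj_on_inverseI[where g = "\<lambda>k. M *v k"]) (simp add: matrix_vector_mul_assoc M')
  define Z where "Z c = {k. (\<forall>i. k $ i \<in> \<int>) \<and> (\<forall>i. \<bar>k $ i - (M' *v c) $ i\<bar> < K * R)}" for c
  define N where "N = nat (\<lfloor>2 * (K * R)\<rfloor> + 1) ^ CARD('n)"
  have image_sub: "(\<lambda>p. M' *v p) ` (lattice M \<inter> ball c R) \<subseteq> Z c" for c
  proof clarify
    fix p assume "p \<in> lattice M" "p \<in> ball c R"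
    then obtain k where k: "p = M *v k" "\<forall>i. k $ i \<in> \<int>" unfolding lattice_def by blast
    have "\<bar>(M' *v p) $ i - (M' *v c) $ i\<bar> < K * R" for i
    proof -
      have "\<bar>(M' *v p) $ i - (M' *v c) $ i\<bar> = \<bar>(M' *v (p - c)) $ i\<bar>"
        by (simp add: matrix_vector_mult_diff_distrib)
      also have "\<dots> \<le> norm (M' *v (p - c))" by (rule component_le_norm_cart)
      also have "\<dots> \<le> norm (p - c) * K" by (rule K)
      also have "\<dots> < R * K" using \<open>p \<in> ball c R\<close> \<open>K > 0\<close> by (simp add: dist_norm norm_minus_commute)
      finally show ?thesis by (simp add: mult.commute)
    qed
    moreover have "M' *v p = k" using k M' by (simp add: matrix_vector_mul_assoc)
    ultimately show "M' *v p \<in> Z c" using k unfolding Z_def by auto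
  qed
  show ?thesis
  proof (rule that)
    fix c
    have "finite (Z c)" and card_Z: "card (Z c) \<le> N"
      unfolding Z_def N_def by (rule finite_card_integer_vectors_near)+
    then show "finite (lattice M \<inter> ball c R)"
      using finite_imageD[OF finite_subset[OF image_sub] inj] by blast
    have "card (lattice M \<inter> ball c R) = card ((\<lambda>p. M' *v p) ` (lattice M \<inter> ball c R))"
      using inj by (rule card_image[symmetric])
    also have "\<dots> \<le> card (Z c)" using \<open>finite (Z c)\<close> image_sub by (rule card_mono)
    finally show "card (lattice M \<inter> ball c R) \<le> N" using card_Z by linarith
  qed
qed

lemma finite_bdry_lattice_points:
  fixes M :: "real ^ 'n ^ 'n"
  assumes "invertible M" and "compact \<Omega>"
  shows "finite (bdry_lattice_points M r \<Omega>)"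
proof -
  obtain B where "frontier \<Omega> \<subseteq> ball 0 B"
    using bounded_subset_ballD[OF compact_imp_bounded[OF compact_frontier[OF \<open>compact \<Omega>\<close>]]] by blast
  then have "bdry_lattice_points M r \<Omega> \<subseteq> lattice M \<inter> ball 0 (B + r)"
    unfolding bdry_lattice_points_def by (force elim!: set_plus_elim intro: norm_triangle_lt)
  moreover have "finite (lattice M \<inter> ball 0 (B + r))"
    using lattice_ball_card_bounded[OF \<open>invertible M\<close>] by metis
  ultimately show ?thesis by (rule finite_subset)
qed

lemma exists_radius_power_comparable:
  fixes L :: real
  assumes "e \<ge> 1" and "L > 0"
  obtains \<rho> where "0 < \<rho>" "\<rho> \<le> 1" "\<rho> ^ e < L" "L \<le> (L + 2) * \<rho> ^ e"
proof (cases "L \<ge> 2")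
  case True
  then show ?thesis by (intro that[of 1]) auto
next
  case False
  define \<rho> where "\<rho> = root e (L / 2)"
  have "\<rho> ^ e = L / 2" using assms by (simp add: \<rho>_def real_root_pow_pos2)
  moreover have "0 < \<rho>" "\<rho> \<le> 1" using False assms by (auto simp: \<rho>_def)
  ultimately show ?thesis using assms by (intro that[of \<rho>]) (auto simp: field_simps)
qed

lemma card_separated_near_ahlfors_regular_boundary:
  fixes \<Omega> :: "(real ^ 'n) set"
  defines "e \<equiv> CARD('n) - 1"
  assumes AR: "max_ahlfors_regular_boundary \<Omega> \<kappa>" and L: "bdry_measure \<Omega> = ennreal L"
    and "0 < \<rho>" and "\<rho> ^ e < L"
    and "finite P" and P: "P \<subseteq> frontier \<Omega> + ball 0 r"
    and sep: "\<And>p q. p \<in> P \<Longrightarrow> q \<in> P \<Longrightarrow> p \<noteq> q \<Longrightarrow> 2 * r + 2 * \<rho> + 1 \<le> dist p q"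
  shows "real (card P) * \<kappa> * \<rho> ^ e \<le> L"
proof -
  have "\<kappa> > 0" using AR unfolding max_ahlfors_regular_boundary_def by blast
  have e: "real CARD('n) - 1 = real e" unfolding e_def by (simp add: of_nat_diff Suc_leI)
  have "\<exists>z. z \<in> frontier \<Omega> \<and> dist p z < r" if "p \<in> P" for p
  proof -
    have "p \<in> frontier \<Omega> + ball 0 r" using P \<open>p \<in> P\<close> by blast
    then obtain a b where "a \<in> frontier \<Omega>" "b \<in> ball 0 r" "p = a + b"
      by (rule set_plus_elim)
    then show ?thesis by (auto simp: dist_norm)
  qed
  then obtain z where z: "\<And>p. p \<in> P \<Longrightarrow> z p \<in> frontier \<Omega>" "\<And>p. p \<in> P \<Longrightarrow> dist p (z p) < r"
    by metis
  have "of_nat (card P) * ennreal (\<kappa> * \<rho> ^ e) \<le> hausdorff_measure (real e) (frontier \<Omega>)"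
  proof (rule card_mult_le_hausdorff_measure_packing[where \<epsilon> = 1 and \<rho> = \<rho> and z = z])
    fix p q assume "p \<in> P" "q \<in> P" "p \<noteq> q"
    then have "2 * r + 2 * \<rho> + 1 \<le> dist p q" "dist p (z p) < r" "dist q (z q) < r"
      using sep z by auto
    then show "2 * \<rho> + 1 \<le> dist (z p) (z q)" by metric
  next
    fix p assume "p \<in> P"
    moreover have "ennreal (\<rho> ^ e) < bdry_measure \<Omega>"
      using L \<open>\<rho> ^ e < L\<close> \<open>0 < \<rho>\<close> by (simp add: ennreal_less_iff)
    ultimately show "ennreal (\<kappa> * \<rho> ^ e) \<le> hausdorff_measure (real e) (frontier \<Omega> \<inter> ball (z p) \<rho>)"
      using AR z(1) \<open>0 < \<rho>\<close> unfolding max_ahlfors_regular_boundary_def e e_def by blast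
  qed (use \<open>finite P\<close> in auto)
  also have "\<dots> = ennreal L" using L by (simp add: bdry_measure_def e)
  finally have "ennreal (real (card P) * (\<kappa> * \<rho> ^ e)) \<le> ennreal L"
    using \<open>\<kappa> > 0\<close> \<open>0 < \<rho>\<close> by (simp add: ennreal_of_nat_eq_real_of_nat ennreal_mult)
  moreover have "0 < L" using \<open>\<rho> ^ e < L\<close> \<open>0 < \<rho>\<close> zero_less_power less_trans by blast
  ultimately show ?thesis by (simp add: ennreal_le_iff mult.assoc)
qed

lemma card_near_ahlfors_regular_boundary_le:
  fixes \<Omega> :: "(real ^ 'n) set"
  assumes "CARD('n) \<ge> 2" and AR: "max_ahlfors_regular_boundary \<Omega> \<kappa>"
    and L: "bdry_measure \<Omega> = ennreal L" "L > 0" and "r > 0"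
    and "finite S" and S: "S \<subseteq> frontier \<Omega> + ball 0 r"
    and N: "\<And>c. card (S \<inter> ball c (2 * r + 3)) \<le> N"
  shows "real (card S) * \<kappa> \<le> real N * (L + 2)"
proof -
  define e where "e = CARD('n) - 1"
  have "e \<ge> 1" using assms(1) by (simp add: e_def)
  have "\<kappa> > 0" using AR unfolding max_ahlfors_regular_boundary_def by blast
  obtain \<rho> where \<rho>: "0 < \<rho>" "\<rho> \<le> 1" "\<rho> ^ e < L" "L \<le> (L + 2) * \<rho> ^ e"
    using exists_radius_power_comparable[OF \<open>e \<ge> 1\<close> \<open>L > 0\<close>] .
  define R where "R = 2 * r + 2 * \<rho> + 1"
  have "card (S \<inter> ball c R) \<le> N" for c
  proof -
    have "S \<inter> ball c R \<subseteq> S \<inter> ball c (2 * r + 3)" using \<rho>(2) by (auto simp: R_def)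
    then show ?thesis using N[of c] \<open>finite S\<close> by (meson card_mono finite_Int order_trans)
  qed
  moreover have "R > 0" using \<open>r > 0\<close> \<rho>(1) by (simp add: R_def)
  ultimately obtain P where "P \<subseteq> S" and sep: "\<And>p q. p \<in> P \<Longrightarrow> q \<in> P \<Longrightarrow> p \<noteq> q \<Longrightarrow> R \<le> dist p q"
    and card_S: "card S \<le> card P * N"
    using exists_separated_subset_card_le[OF \<open>finite S\<close>] by blast
  have "finite P" using \<open>finite S\<close> \<open>P \<subseteq> S\<close> by (rule finite_subset[rotated])
  moreover have "P \<subseteq> frontier \<Omega> + ball 0 r" using \<open>P \<subseteq> S\<close> S by blast
  ultimately have "real (card P) * \<kappa> * \<rho> ^ e \<le> L"
    using card_separated_near_ahlfors_regular_boundary[OF AR L(1) \<rho>(1)] \<rho>(3) sep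
    unfolding e_def R_def by blast
  then have "real (card P) * \<kappa> * \<rho> ^ e \<le> (L + 2) * \<rho> ^ e" using \<rho>(4) by linarith
  then have card_P: "real (card P) * \<kappa> \<le> L + 2" using \<rho>(1) by simp
  have "real (card S) * \<kappa> \<le> real (card P * N) * \<kappa>"
    using card_S \<open>\<kappa> > 0\<close> by (intro mult_right_mono) linarith+
  also have "\<dots> = real N * (real (card P) * \<kappa>)" by simp
  also have "\<dots> \<le> real N * (L + 2)" using card_P by (intro mult_left_mono) simp_all
  finally show ?thesis .
qed

lemma ennreal_mult_divide_mult_one_plus_divide:
  fixes C D L \<kappa> :: real
  assumes "0 \<le> C" "0 \<le> D" "0 < L" "0 < \<kappa>"
  shows "ennreal C * ennreal L / ennreal \<kappa> * (1 + ennreal D / ennreal L) = ennreal (C * (L + D) / \<kappa>)"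
proof -
  have "ennreal C * ennreal L / ennreal \<kappa> = ennreal (C * L / \<kappa>)"
    using assms by (simp add: ennreal_mult[symmetric] divide_ennreal)
  moreover have "1 + ennreal D / ennreal L = ennreal (1 + D / L)"
    using assms by (simp add: divide_ennreal ennreal_plus)
  ultimately have "ennreal C * ennreal L / ennreal \<kappa> * (1 + ennreal D / ennreal L)
        = ennreal (C * L / \<kappa>) * ennreal (1 + D / L)"
    by simp
  also have "\<dots> = ennreal (C * (L + D) / \<kappa>)"
    using assms by (simp add: ennreal_mult[symmetric] field_simps)
  finally show ?thesis .
qed

lemma card_bdry_lattice_points_le:
  fixes M :: "real ^ 'n ^ 'n" and \<Omega> :: "(real ^ 'n) set"
  assumes "CARD('n) \<ge> 2" and "invertible M" and "r > 0" and "compact \<Omega>"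
    and AR: "max_ahlfors_regular_boundary \<Omega> \<kappa>" and L: "bdry_measure \<Omega> = ennreal L" "L > 0"
    and N: "\<And>c. card (lattice M \<inter> ball c (2 * r + 3)) \<le> N"
  shows "real (card (bdry_lattice_points M r \<Omega>)) * \<kappa> \<le> real N * (L + 2)"
proof (rule card_near_ahlfors_regular_boundary_le[OF assms(1) AR L \<open>r > 0\<close>])
  show "finite (bdry_lattice_points M r \<Omega>)"
    using \<open>invertible M\<close> \<open>compact \<Omega>\<close> by (rule finite_bdry_lattice_points)
  show "bdry_lattice_points M r \<Omega> \<subseteq> frontier \<Omega> + ball 0 r"
    unfolding bdry_lattice_points_def by blast
  fix c
  have "bdry_lattice_points M r \<Omega> \<inter> ball c (2 * r + 3) \<subseteq> lattice M \<inter> ball c (2 * r + 3)"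
    unfolding bdry_lattice_points_def by blast
  then show "card (bdry_lattice_points M r \<Omega> \<inter> ball c (2 * r + 3)) \<le> N"
    using lattice_ball_card_bounded[OF \<open>invertible M\<close>] N by (meson card_mono order_trans)
qed

theorem proposition2p4:
  fixes M :: "real ^ 'n ^ 'n" and d :: nat and r :: real
  assumes "d \<ge> 1" and "CARD('n) = 2 * d"
    and "invertible M" and "r > 0"
  shows "\<exists>C D :: real. \<forall>(\<Omega> :: (real ^ 'n) set) \<kappa>.
           compact \<Omega> \<and> max_ahlfors_regular_boundary \<Omega> \<kappa> \<and> bdry_measure \<Omega> > 0 \<longrightarrow>
           ennreal (real (card (bdry_lattice_points M r \<Omega>)))
             \<le> ennreal C * bdry_measure \<Omega> / ennreal \<kappa> * (1 + ennreal D / bdry_measure \<Omega>)"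
proof -
  have "CARD('n) \<ge> 2" using assms(1,2) by simp
  obtain N where N: "\<And>c. card (lattice M \<inter> ball c (2 * r + 3)) \<le> N"
    using lattice_ball_card_bounded[OF \<open>invertible M\<close>] by metis
  \<comment> \<open>\<open>C = N + 1\<close> rather than \<open>N\<close>: for \<open>|\<partial>\<Omega>| = \<infinity>\<close> the bound must not collapse to \<open>0 * \<infinity> = 0\<close>.\<close>
  show ?thesis
  proof (rule exI[of _ "real N + 1"], rule exI[of _ "2::real"], intro allI impI, elim conjE)
    fix \<Omega> :: "(real ^ 'n) set" and \<kappa> :: real
    assume "compact \<Omega>" and AR: "max_ahlfors_regular_boundary \<Omega> \<kappa>" and "bdry_measure \<Omega> > 0"
    let ?S = "bdry_lattice_points M r \<Omega>"
    have "\<kappa> > 0" using AR unfolding max_ahlfors_regular_boundary_def by blast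
    show "ennreal (real (card ?S)) \<le> ennreal (real N + 1) * bdry_measure \<Omega> / ennreal \<kappa>
            * (1 + ennreal 2 / bdry_measure \<Omega>)"
    proof (cases "bdry_measure \<Omega>")
      case (real L)
      with \<open>bdry_measure \<Omega> > 0\<close> have "L > 0" by auto
      have "real (card ?S) * \<kappa> \<le> real N * (L + 2)"
        using card_bdry_lattice_points_le[OF \<open>CARD('n) \<ge> 2\<close> assms(3,4) \<open>compact \<Omega>\<close> AR real(2) \<open>L > 0\<close> N] .
      then have "real (card ?S) \<le> (real N + 1) * (L + 2) / \<kappa>"
        using \<open>\<kappa> > 0\<close> \<open>L > 0\<close> by (simp add: field_simps)
      moreover have "ennreal (real N + 1) * ennreal L / ennreal \<kappa> * (1 + ennreal 2 / ennreal L)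
          = ennreal ((real N + 1) * (L + 2) / \<kappa>)"
        using \<open>\<kappa> > 0\<close> \<open>L > 0\<close> by (intro ennreal_mult_divide_mult_one_plus_divide) auto
      ultimately show ?thesis unfolding real(2) by (metis ennreal_leI)
    next
      case top
      then show ?thesis using \<open>\<kappa> > 0\<close> by (simp add: ennreal_mult_top ennreal_top_divide)
    qed
  qed
qed

end
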